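(* For $P,Q\in\mathcal E_n$ homogeneous of the same degree, the scalars $\Delta_P(Q)$, $\Delta_Q(P)$, $(P)\nabla_Q$ and $(Q)\nabla_P$ (elements of $\mathcal E_n^0=\mathbb Q$) are all equal. Consequently, setting $\langle P,Q\rangle$ equal to this common value for $P,Q$ homogeneous of equal degree and $\langle P,Q\rangle=0$ for homogeneous $P,Q$ of different degrees defines a symmetric bilinear form on $\mathcal E_n$, and for all $P_1,P_2,Q$: $\langle P_1P_2,Q\rangle=\langle P_1,\Delta_{P_2}(Q)\rangle=\langle P_2,(Q)\nabla_{P_1}\rangle$ (i.e. $\Delta_{P}$ is adjoint to right multiplication by $P$ and $\nabla_P$ to left multiplication by $P$).
   Context: Let $n\ge 1$. The Fomin–Kirillov algebra $\mathcal E_n$ is the associative $\mathbb Q$-algebra with generators $x_{ij}$ for ordered pairs of distinct $i,j\in[n]$, subject to $x_{ij}=-x_{ji}$, $x_{ij}^2=0$, $x_{ij}x_{kl}=x_{kl}x_{ij}$ for distinct $i,j,k,l$, and $x_{ij}x_{jk}+x_{jk}x_{ki}+x_{ki}x_{ij}=0$ for distinct $i,j,k$. It is graded by degree; $\mathcal E_n^d$ is the degree-$d$ part. $\mathcal E_n$ is also graded by $S_n$: the $S_n$-degree of $x_{ij}$ is the transposition $\sigma_{ij}=(i\,j)$, extended multiplicatively; $\sigma_Q$ is the $S_n$-degree of an $S_n$-homogeneous $Q$; $S_n$ acts by automorphisms via $\sigma(x_{ij})=x_{\sigma(i)\sigma(j)}$. For distinct $a,b$, $\Delta_{ab}:\mathcal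 E_n\to\mathcal E_n$ is the unique linear map with $\Delta_{ab}(x_{ij})=1$ if $(i,j)=(a,b)$, $-1$ if $(i,j)=(b,a)$, $0$ otherwise, and $\Delta_{ab}(PQ)=\Delta_{ab}(P)Q+\sigma_{ab}(P)\Delta_{ab}(Q)$; and $\nabla_{ab}$ (written on the right) is the unique linear map with $(x_{ij})\nabla_{ab}=\Delta_{ab}(x_{ij})$ and $(PQ)\nabla_{ab}=P\cdot(Q)\nabla_{ab}+(P)\nabla_{\sigma_Q(a)\sigma_Q(b)}\cdot Q$ for $S_n$-homogeneous $Q$. These operators satisfy the defining relations of $\mathcal E_n$ (with $x_{ab}\mapsto\Delta_{ab}$, resp. $\nabla_{ab}$), so for $P=x_{i_1j_1}\cdots x_{i_kj_k}$ one defines $\Delta_P=\Delta_{i_1j_1}\circ\cdots\circ\Delta_{i_kj_k}$ and $(Q)\nabla_P=(\cdots((Q)\nabla_{i_1j_1})\cdots)\nabla_{i_kj_k}$, extended linearly to all $P\in\mathcal E_n$. *)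

theory Defs
  imports Complex_Main
begin

text \<open>Free associative Q-algebra on the generators x_ij, represented by coefficient
functions on words (lists of ordered pairs (i,j)). The Fomin-Kirillov algebra E_n is the
quotient of the free algebra on the generators x_ij (i,j in {1..n}, i ~= j) by the two-sided
ideal fk_ideal n; elements of E_n are handled via representatives and the congruence fk_cong.\<close>

type_synonym fa = "(nat \<times> nat) list \<Rightarrow> rat"

definition fk_gens :: "nat \<Rightarrow> (nat \<times> nat) set" where
  "fk_gens n = {(i, j). i \<in> {1..n} \<and> j \<in> {1..n} \<and> i \<noteq> j}"

definition fa_elem :: "nat \<Rightarrow> fa \<Rightarrow> bool" where
  "fa_elem n P \<longleftrightarrow> finite {w. P w \<noteq> 0} \<and> (\<forall>w. P w \<noteq> 0 \<longrightarrow> set w \<subseteq> fk_gens n)"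

definition fa_word :: "(nat \<times> nat) list \<Rightarrow> fa" where
  "fa_word u = (\<lambda>v. if v = u then 1 else 0)"

definition fa_gen :: "nat \<Rightarrow> nat \<Rightarrow> fa" where
  "fa_gen i j = fa_word [(i, j)]"

definition fa_add :: "fa \<Rightarrow> fa \<Rightarrow> fa" where
  "fa_add P Q = (\<lambda>w. P w + Q w)"

definition fa_sub :: "fa \<Rightarrow> fa \<Rightarrow> fa" where
  "fa_sub P Q = (\<lambda>w. P w - Q w)"

definition fa_smult :: "rat \<Rightarrow> fa \<Rightarrow> fa" where
  "fa_smult c P = (\<lambda>w. c * P w)"

definition fa_mult :: "fa \<Rightarrow> fa \<Rightarrow> fa" where
  "fa_mult P Q = (\<lambda>w. \<Sum>k\<in>{0..length w}. P (take k w) * Q (drop k w))"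

definition fa_lin :: "((nat \<times> nat) list \<Rightarrow> fa) \<Rightarrow> fa \<Rightarrow> fa" where
  "fa_lin f P = (\<lambda>v. \<Sum>w\<in>{w. P w \<noteq> 0}. P w * f w v)"

definition fa_homog :: "nat \<Rightarrow> fa \<Rightarrow> bool" where
  "fa_homog d P \<longleftrightarrow> (\<forall>w. P w \<noteq> 0 \<longrightarrow> length w = d)"

definition fa_hcomp :: "nat \<Rightarrow> fa \<Rightarrow> fa" where
  "fa_hcomp d P = (\<lambda>w. if length w = d then P w else 0)"

definition fk_rels :: "nat \<Rightarrow> fa set" where
  "fk_rels n =
     {fa_add (fa_gen i j) (fa_gen j i) | i j. (i, j) \<in> fk_gens n}
   \<union> {fa_mult (fa_gen i j) (fa_gen i j) | i j. (i, j) \<in> fk_gens n}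
   \<union> {fa_sub (fa_mult (fa_gen i j) (fa_gen k l)) (fa_mult (fa_gen k l) (fa_gen i j)) | i j k l.
        i \<in> {1..n} \<and> j \<in> {1..n} \<and> k \<in> {1..n} \<and> l \<in> {1..n} \<and> distinct [i, j, k, l]}
   \<union> {fa_add (fa_add (fa_mult (fa_gen i j) (fa_gen j k)) (fa_mult (fa_gen j k) (fa_gen k i)))
             (fa_mult (fa_gen k i) (fa_gen i j)) | i j k.
        i \<in> {1..n} \<and> j \<in> {1..n} \<and> k \<in> {1..n} \<and> distinct [i, j, k]}"

inductive_set fk_ideal :: "nat \<Rightarrow> fa set" for n :: nat where
  zero: "(\<lambda>_. 0) \<in> fk_ideal n"
| gen: "r \<in> fk_rels n \<Longrightarrow> set u \<subseteq> fk_gens n \<Longrightarrow> set v \<subseteq> fk_gens n \<Longrightarrow>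
        fa_mult (fa_mult (fa_word u) r) (fa_word v) \<in> fk_ideal n"
| add: "a \<in> fk_ideal n \<Longrightarrow> b \<in> fk_ideal n \<Longrightarrow> fa_add a b \<in> fk_ideal n"
| smult: "a \<in> fk_ideal n \<Longrightarrow> fa_smult c a \<in> fk_ideal n"

definition fk_cong :: "nat \<Rightarrow> fa \<Rightarrow> fa \<Rightarrow> bool" where
  "fk_cong n P Q \<longleftrightarrow> fa_sub P Q \<in> fk_ideal n"

definition tsp :: "nat \<times> nat \<Rightarrow> nat \<Rightarrow> nat" where
  "tsp g x = (if x = fst g then snd g else if x = snd g then fst g else x)"

definition gen_map :: "(nat \<Rightarrow> nat) \<Rightarrow> nat \<times> nat \<Rightarrow> nat \<times> nat" where
  "gen_map s g = (s (fst g), s (snd g))"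

fun sigma_word :: "(nat \<times> nat) list \<Rightarrow> nat \<Rightarrow> nat" where
  "sigma_word [] = id"
| "sigma_word (g # w) = tsp g \<circ> sigma_word w"

text \<open>Delta_ab(x_ij) as a scalar.\<close>
definition dgen :: "nat \<times> nat \<Rightarrow> nat \<times> nat \<Rightarrow> rat" where
  "dgen ab g = (if g = ab then 1 else if g = (snd ab, fst ab) then -1 else 0)"

text \<open>Delta_ab on words: Delta(x w) = Delta(x) w + sigma_ab(x) Delta(w).\<close>
fun delta_word :: "nat \<times> nat \<Rightarrow> (nat \<times> nat) list \<Rightarrow> fa" where
  "delta_word ab [] = (\<lambda>_. 0)"
| "delta_word ab (g # w) = (\<lambda>v. dgen ab g * fa_word w v +
      (case v of [] \<Rightarrow> 0 | h # v' \<Rightarrow> if h = gen_map (tsp ab) g then delta_word ab w v' else 0))"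

definition delta_op :: "nat \<times> nat \<Rightarrow> fa \<Rightarrow> fa" where
  "delta_op ab Q = fa_lin (delta_word ab) Q"

text \<open>nabla_ab on words (written on the right):
  (x w) nabla_ab = x (w nabla_ab) + (x nabla_{sigma_w(a) sigma_w(b)}) w.\<close>
fun nabla_word :: "nat \<times> nat \<Rightarrow> (nat \<times> nat) list \<Rightarrow> fa" where
  "nabla_word ab [] = (\<lambda>_. 0)"
| "nabla_word ab (g # w) = (\<lambda>v.
      (case v of [] \<Rightarrow> 0 | h # v' \<Rightarrow> if h = g then nabla_word ab w v' else 0)
      + dgen (gen_map (sigma_word w) ab) g * fa_word w v)"

definition nabla_op :: "nat \<times> nat \<Rightarrow> fa \<Rightarrow> fa" where
  "nabla_op ab Q = fa_lin (nabla_word ab) Q"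

fun Delta_word :: "(nat \<times> nat) list \<Rightarrow> fa \<Rightarrow> fa" where
  "Delta_word [] Q = Q"
| "Delta_word (g # w) Q = delta_op g (Delta_word w Q)"

fun Nabla_word :: "fa \<Rightarrow> (nat \<times> nat) list \<Rightarrow> fa" where
  "Nabla_word Q [] = Q"
| "Nabla_word Q (g # w) = Nabla_word (nabla_op g Q) w"

definition Delta :: "fa \<Rightarrow> fa \<Rightarrow> fa" where
  "Delta P Q = (\<lambda>v. \<Sum>w\<in>{w. P w \<noteq> 0}. P w * Delta_word w Q v)"

definition Nabla :: "fa \<Rightarrow> fa \<Rightarrow> fa" where
  "Nabla Q P = (\<lambda>v. \<Sum>w\<in>{w. P w \<noteq> 0}. P w * Nabla_word Q w v)"

definition fk_pair :: "fa \<Rightarrow> fa \<Rightarrow> rat" where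
  "fk_pair P Q = (\<Sum>d\<in>length ` {w. P w \<noteq> 0}. Delta (fa_hcomp d P) (fa_hcomp d Q) [])"

end

theory Submission
  imports Defs
begin

text \<open>For words u and v, the scalar Delta_u(v) (the empty-word coefficient of Delta_u applied to v)
defines a pairing of words that vanishes unless u and v have the same length. It is symmetric:
removing the last letter a of u gives Delta_{u a}(v) = Delta_u(Delta_a v), removing the last letter
of v gives a dual recursion, and these two recursions commute because the Delta_ab are equivariant
under the transpositions. The same pairing computes (u) nabla_v. Since the operators Delta_ab
satisfy the defining relations of E_n, the pairing of u r v with anything vanishes for a relation
r, so the defining ideal lies in the radical and the form descends to E_n. Adjointness is then
associativity of composition: the pairing of P1 P2 with Q is Delta_P1 (Delta_P2 Q), and dually
for nabla.\<close>

definition finsupp :: "fa \<Rightarrow> bool" where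
  "finsupp X \<longleftrightarrow> finite {w. X w \<noteq> 0}"

definition lin_ext :: "((nat \<times> nat) list \<Rightarrow> rat) \<Rightarrow> fa \<Rightarrow> rat" where
  "lin_ext g X = (\<Sum>w\<in>{w. X w \<noteq> 0}. X w * g w)"

lemma finsupp_if_fa_elem: "fa_elem n P \<Longrightarrow> finsupp P"
  by (simp add: fa_elem_def finsupp_def)

lemma finsupp_zero [simp]: "finsupp (\<lambda>_. 0)"
  by (simp add: finsupp_def)

lemma finsupp_fa_word [simp]: "finsupp (fa_word s)"
  by (simp add: finsupp_def fa_word_def)

lemma finsupp_add: "finsupp A \<Longrightarrow> finsupp B \<Longrightarrow> finsupp (\<lambda>y. A y + B y)"
  unfolding finsupp_def
  by (rule finite_subset[of _ "{w. A w \<noteq> 0} \<union> {w. B w \<noteq> 0}"]) auto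

lemma finsupp_smult: "finsupp A \<Longrightarrow> finsupp (\<lambda>y. c * A y)"
  unfolding finsupp_def by (rule finite_subset[of _ "{w. A w \<noteq> 0}"]) auto

lemma lin_ext_superset:
  assumes "finite S" "{w. X w \<noteq> 0} \<subseteq> S"
  shows "lin_ext g X = (\<Sum>w\<in>S. X w * g w)"
  unfolding lin_ext_def by (rule sum.mono_neutral_left) (use assms in auto)

lemma lin_ext_eq_0: "(\<And>w. X w \<noteq> 0 \<Longrightarrow> g w = 0) \<Longrightarrow> lin_ext g X = 0"
  unfolding lin_ext_def by (auto intro: sum.neutral)

lemma lin_ext_nonzeroE:
  assumes "lin_ext g X \<noteq> 0"
  obtains w where "X w \<noteq> 0" "g w \<noteq> 0"
  using assms that lin_ext_eq_0[of X g] by blast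

lemma lin_ext_cong: "(\<And>w. X w \<noteq> 0 \<Longrightarrow> g w = h w) \<Longrightarrow> lin_ext g X = lin_ext h X"
  unfolding lin_ext_def by (auto intro: sum.cong)

lemma lin_ext_zero [simp]: "lin_ext g (\<lambda>_. 0) = 0" "lin_ext (\<lambda>_. 0) X = 0"
  by (simp_all add: lin_ext_def)

lemma lin_ext_fa_word [simp]: "lin_ext g (fa_word s) = g s"
proof -
  have "{w. fa_word s w \<noteq> 0} = {s}" by (auto simp: fa_word_def)
  then show ?thesis by (simp add: lin_ext_def fa_word_def)
qed

lemma lin_ext_add:
  assumes "finsupp A" "finsupp B"
  shows "lin_ext g (\<lambda>y. A y + B y) = lin_ext g A + lin_ext g B"
proof -
  let ?S = "{w. A w \<noteq> 0} \<union> {w. B w \<noteq> 0}"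
  have S: "finite ?S" using assms by (simp add: finsupp_def)
  have "lin_ext g (\<lambda>y. A y + B y) = (\<Sum>w\<in>?S. (A w + B w) * g w)"
    by (rule lin_ext_superset[OF S]) auto
  also have "\<dots> = (\<Sum>w\<in>?S. A w * g w) + (\<Sum>w\<in>?S. B w * g w)"
    by (simp add: distrib_right sum.distrib)
  also have "\<dots> = lin_ext g A + lin_ext g B"
    using lin_ext_superset[OF S, of A g] lin_ext_superset[OF S, of B g] by auto
  finally show ?thesis .
qed

lemma lin_ext_smult: "lin_ext g (\<lambda>y. c * A y) = c * lin_ext g A"
proof (cases "c = 0")
  case False
  then have "{w. c * A w \<noteq> 0} = {w. A w \<noteq> 0}" by auto
  then show ?thesis by (simp add: lin_ext_def sum_distrib_left mult.assoc)
qed (simp add: lin_ext_def)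

lemma lin_ext_sum_list:
  assumes "\<And>l. l \<in> set L \<Longrightarrow> finsupp (F l)"
  shows "lin_ext g (\<lambda>y. \<Sum>l\<leftarrow>L. F l y) = (\<Sum>l\<leftarrow>L. lin_ext g (F l))
       \<and> finsupp (\<lambda>y. \<Sum>l\<leftarrow>L. F l y)"
  using assms by (induction L) (simp_all add: lin_ext_add finsupp_add)

lemma lin_ext_sum:
  assumes "finite I" "\<And>i. i \<in> I \<Longrightarrow> finsupp (F i)"
  shows "lin_ext g (\<lambda>y. \<Sum>i\<in>I. F i y) = (\<Sum>i\<in>I. lin_ext g (F i))
       \<and> finsupp (\<lambda>y. \<Sum>i\<in>I. F i y)"
  using assms by (induction I rule: finite_induct) (simp_all add: lin_ext_add finsupp_add)

lemma lin_ext_fun_add: "lin_ext (\<lambda>w. g w + h w) X = lin_ext g X + lin_ext h X"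
  by (simp add: lin_ext_def distrib_left sum.distrib)

lemma lin_ext_fun_smult: "lin_ext (\<lambda>w. c * g w) X = c * lin_ext g X"
  by (simp add: lin_ext_def sum_distrib_left algebra_simps)

lemma lin_ext_fun_sum_list: "lin_ext (\<lambda>w. \<Sum>l\<leftarrow>L. F l w) X = (\<Sum>l\<leftarrow>L. lin_ext (F l) X)"
  by (induction L) (simp_all add: lin_ext_fun_add)

lemma lin_ext_commute:
  "lin_ext (\<lambda>u. lin_ext (\<lambda>v. h u v) Q) P = lin_ext (\<lambda>v. lin_ext (\<lambda>u. h u v) P) Q"
  unfolding lin_ext_def sum_distrib_left by (subst sum.swap) (simp add: algebra_simps)

lemma finsupp_lin_ext:
  assumes "finsupp X" "\<And>y. finsupp (F y)"
  shows "finsupp (\<lambda>z. lin_ext (\<lambda>y. F y z) X)"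
proof -
  have "{z. lin_ext (\<lambda>y. F y z) X \<noteq> 0} \<subseteq> (\<Union>y\<in>{y. X y \<noteq> 0}. {z. F y z \<noteq> 0})"
    by (auto elim: lin_ext_nonzeroE)
  then show ?thesis using assms unfolding finsupp_def by (auto intro: finite_subset)
qed

lemma lin_ext_lin_ext:
  assumes "finsupp X" "\<And>y. finsupp (F y)"
  shows "lin_ext h (\<lambda>z. lin_ext (\<lambda>y. F y z) X) = lin_ext (\<lambda>y. lin_ext h (F y)) X"
proof -
  let ?Y = "{y. X y \<noteq> 0}"
  let ?Z = "\<Union>y\<in>?Y. {z. F y z \<noteq> 0}"
  have Z: "finite ?Z" and Y: "finite ?Y" using assms by (auto simp: finsupp_def)
  have "lin_ext h (\<lambda>z. lin_ext (\<lambda>y. F y z) X) = (\<Sum>z\<in>?Z. lin_ext (\<lambda>y. F y z) X * h z)"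
    by (rule lin_ext_superset[OF Z]) (auto elim: lin_ext_nonzeroE)
  also have "\<dots> = (\<Sum>z\<in>?Z. (\<Sum>y\<in>?Y. X y * F y z) * h z)"
    by (simp add: lin_ext_def)
  also have "\<dots> = (\<Sum>y\<in>?Y. X y * (\<Sum>z\<in>?Z. F y z * h z))"
    by (simp add: sum_distrib_left sum_distrib_right algebra_simps sum.swap[of _ ?Z])
  also have "\<dots> = (\<Sum>y\<in>?Y. X y * lin_ext h (F y))"
    by (intro sum.cong refl arg_cong[where f = "(*) _"] lin_ext_superset[OF Z, symmetric]) auto
  also have "\<dots> = lin_ext (\<lambda>y. lin_ext h (F y)) X" by (simp add: lin_ext_def)
  finally show ?thesis .
qed

lemma lin_ext_fa_word_at: "finsupp X \<Longrightarrow> lin_ext (\<lambda>w. fa_word w v) X = X v"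
proof (cases "X v = 0")
  case False
  assume "finsupp X"
  then have "lin_ext (\<lambda>w. fa_word w v) X = (\<Sum>w\<in>{v}. X w * fa_word w v)"
    unfolding lin_ext_def using False
    by (intro sum.mono_neutral_right) (auto simp: fa_word_def finsupp_def)
  then show ?thesis by (simp add: fa_word_def)
qed (auto simp: lin_ext_def fa_word_def intro!: sum.neutral)

lemma fa_lin_eq: "fa_lin f P = (\<lambda>v. lin_ext (\<lambda>w. f w v) P)"
  by (simp add: fa_lin_def lin_ext_def)

lemma Delta_eq: "Delta P Q = (\<lambda>z. lin_ext (\<lambda>t. Delta_word t Q z) P)"
  by (simp add: Delta_def lin_ext_def)

lemma Nabla_eq: "Nabla Q P = (\<lambda>z. lin_ext (\<lambda>s. Nabla_word Q s z) P)"
  by (simp add: Nabla_def lin_ext_def)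

lemma sum_list_commute:
  "(\<Sum>x\<leftarrow>xs. \<Sum>y\<leftarrow>ys. f x y) = (\<Sum>y\<leftarrow>ys. \<Sum>x\<leftarrow>xs. (f x y :: 'a::comm_monoid_add))"
  by (induction xs) (simp_all add: sum_list_addf)

lemma tsp_Pair: "tsp (p, q) x = (if x = p then q else if x = q then p else x)"
  by (simp add: tsp_def)

lemma tsp_tsp [simp]: "tsp a (tsp a x) = x"
  by (cases a) (auto simp: tsp_Pair)

lemma tsp_eq_iff [simp]: "tsp a x = tsp a y \<longleftrightarrow> x = y"
  by (metis tsp_tsp)

lemma tsp_swap: "tsp (b, a) = tsp (a, b)"
  by (auto simp: tsp_Pair)

lemma gen_map_tsp_tsp [simp]: "gen_map (tsp a) (gen_map (tsp a) g) = g"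
  by (simp add: gen_map_def)

lemma gen_map_tsp_comp_self [simp]: "gen_map (tsp a) \<circ> gen_map (tsp a) = id"
  by (simp add: fun_eq_iff)

lemma tsp_conj: "tsp (gen_map (tsp c) a) (tsp c z) = tsp c (tsp a z)"
  by (cases a) (simp add: gen_map_def tsp_Pair)

lemma gen_map_tsp_conj:
  "gen_map (tsp (gen_map (tsp c) a)) (gen_map (tsp c) g) = gen_map (tsp c) (gen_map (tsp a) g)"
  by (simp add: gen_map_def tsp_conj[unfolded gen_map_def])

lemma dgen_commute: "dgen a b = dgen b a"
  by (cases a; cases b) (auto simp: dgen_def)

lemma dgen_swap: "fst a \<noteq> snd a \<Longrightarrow> dgen (snd a, fst a) g = - dgen a g"
  by (cases a) (auto simp: dgen_def)

lemma tsp_eq_if_dgen_nonzero: "dgen a b \<noteq> 0 \<Longrightarrow> tsp a = tsp b"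
  by (cases a; cases b) (auto simp: dgen_def tsp_swap split: if_splits)

lemma dgen_gen_map_tsp: "dgen (gen_map (tsp c) a) (gen_map (tsp c) g) = dgen a g"
  by (cases a; cases g) (simp add: dgen_def gen_map_def)

lemma dgen_gen_map_tsp_right: "dgen c (gen_map (tsp a) g) = dgen (gen_map (tsp a) c) g"
  using dgen_gen_map_tsp[of a c "gen_map (tsp a) g"] by simp

lemma tsp_commute_disjoint:
  "{a, b} \<inter> {c, d} = {} \<Longrightarrow> tsp (a, b) (tsp (c, d) x) = tsp (c, d) (tsp (a, b) x)"
  by (simp add: tsp_Pair)

type_synonym lincomb = "(rat \<times> (nat \<times> nat) list) list"

fun fa_of_comb :: "lincomb \<Rightarrow> fa" where
  "fa_of_comb [] = (\<lambda>_. 0)"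
| "fa_of_comb ((c, s) # L) = (\<lambda>v. c * fa_word s v + fa_of_comb L v)"

fun delta_comb :: "nat \<times> nat \<Rightarrow> (nat \<times> nat) list \<Rightarrow> lincomb" where
  "delta_comb a [] = []"
| "delta_comb a (g # w) =
     (dgen a g, w) # map (\<lambda>(c, t). (c, gen_map (tsp a) g # t)) (delta_comb a w)"

fun nabla_comb :: "nat \<times> nat \<Rightarrow> (nat \<times> nat) list \<Rightarrow> lincomb" where
  "nabla_comb a [] = []"
| "nabla_comb a (g # w) =
     map (\<lambda>(c, t). (c, g # t)) (nabla_comb a w) @ [(dgen (gen_map (sigma_word w) a) g, w)]"

lemma fa_of_comb_append: "fa_of_comb (L1 @ L2) = (\<lambda>v. fa_of_comb L1 v + fa_of_comb L2 v)"
  by (induction L1 rule: fa_of_comb.induct) (auto simp: algebra_simps)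

lemma fa_of_comb_map_Cons: "fa_of_comb (map (\<lambda>(c, t). (c, h # t)) L) v =
   (case v of [] \<Rightarrow> 0 | h' # v' \<Rightarrow> if h' = h then fa_of_comb L v' else 0)"
  by (induction L rule: fa_of_comb.induct) (auto simp: fa_word_def split: list.splits)

lemma fa_of_comb_nonzeroD: "fa_of_comb L v \<noteq> 0 \<Longrightarrow> \<exists>c. (c, v) \<in> set L"
  by (induction L rule: fa_of_comb.induct) (auto simp: fa_word_def split: if_splits)

lemma finsupp_fa_of_comb [simp]: "finsupp (fa_of_comb L)"
  by (induction L rule: fa_of_comb.induct) (auto intro!: finsupp_add finsupp_smult)

lemma lin_ext_fa_of_comb: "lin_ext g (fa_of_comb L) = (\<Sum>(c, s)\<leftarrow>L. c * g s)"
proof (induction L rule: fa_of_comb.induct)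
  case (2 c s L)
  have "lin_ext g (fa_of_comb ((c, s) # L)) = lin_ext g (\<lambda>v. c * fa_word s v) + lin_ext g (fa_of_comb L)"
    by (simp add: lin_ext_add finsupp_smult)
  then show ?case using 2 by (simp add: lin_ext_smult)
qed simp

lemma delta_word_eq_comb: "delta_word a w = fa_of_comb (delta_comb a w)"
  by (induction w) (auto simp: fa_of_comb_map_Cons fun_eq_iff split: list.splits)

lemma nabla_word_eq_comb: "nabla_word a w = fa_of_comb (nabla_comb a w)"
  by (induction w) (auto simp: fa_of_comb_append fa_of_comb_map_Cons fun_eq_iff split: list.splits)

lemma delta_comb_length: "(c, t) \<in> set (delta_comb g z) \<Longrightarrow> length t + 1 = length z"
  by (induction z arbitrary: c t) auto

lemma nabla_comb_length: "(c, t) \<in> set (nabla_comb g z) \<Longrightarrow> length t + 1 = length z"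
  by (induction z arbitrary: c t) auto

lemma finsupp_delta_word [simp]: "finsupp (delta_word a w)"
  by (simp add: delta_word_eq_comb)

lemma finsupp_nabla_word [simp]: "finsupp (nabla_word a w)"
  by (simp add: nabla_word_eq_comb)

lemma delta_op_eq: "delta_op a Z = (\<lambda>v. lin_ext (\<lambda>w. delta_word a w v) Z)"
  by (simp add: delta_op_def fa_lin_eq)

lemma nabla_op_eq: "nabla_op a Z = (\<lambda>v. lin_ext (\<lambda>w. nabla_word a w v) Z)"
  by (simp add: nabla_op_def fa_lin_eq)

lemma delta_op_fa_word [simp]: "delta_op a (fa_word v) = delta_word a v"
  by (simp add: delta_op_eq)

lemma nabla_op_fa_word [simp]: "nabla_op a (fa_word v) = nabla_word a v"
  by (simp add: nabla_op_eq)

lemma finsupp_delta_op: "finsupp Z \<Longrightarrow> finsupp (delta_op a Z)"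
  unfolding delta_op_eq by (rule finsupp_lin_ext) simp_all

lemma finsupp_nabla_op: "finsupp Z \<Longrightarrow> finsupp (nabla_op a Z)"
  unfolding nabla_op_eq by (rule finsupp_lin_ext) simp_all

lemma finsupp_Delta_word: "finsupp X \<Longrightarrow> finsupp (Delta_word w X)"
  by (induction w) (simp_all add: finsupp_delta_op)

lemma finsupp_Nabla_word: "finsupp X \<Longrightarrow> finsupp (Nabla_word X w)"
  by (induction w arbitrary: X) (simp_all add: finsupp_nabla_op)

lemma Delta_word_append: "Delta_word (u @ w) X = Delta_word u (Delta_word w X)"
  by (induction u) auto

lemma Nabla_word_append: "Nabla_word X (u @ w) = Nabla_word (Nabla_word X u) w"
  by (induction u arbitrary: X) auto

lemma Delta_word_lin:
  "finsupp X \<Longrightarrow> Delta_word w X = (\<lambda>t. lin_ext (\<lambda>y. Delta_word w (fa_word y) t) X)"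
proof (induction w)
  case Nil
  then show ?case by (simp add: lin_ext_fa_word_at)
next
  case (Cons g w)
  have "Delta_word (g # w) X = (\<lambda>t. lin_ext (\<lambda>z. delta_word g z t) (Delta_word w X))"
    by (simp add: delta_op_eq)
  also have "\<dots> = (\<lambda>t. lin_ext (\<lambda>y. lin_ext (\<lambda>z. delta_word g z t) (Delta_word w (fa_word y))) X)"
    by (subst Cons.IH[OF Cons.prems], rule ext, rule lin_ext_lin_ext[OF Cons.prems])
       (simp add: finsupp_Delta_word)
  also have "\<dots> = (\<lambda>t. lin_ext (\<lambda>y. Delta_word (g # w) (fa_word y) t) X)"
    by (simp add: delta_op_eq)
  finally show ?case .
qed

lemma Nabla_word_lin:
  "finsupp X \<Longrightarrow> Nabla_word X w = (\<lambda>t. lin_ext (\<lambda>y. Nabla_word (fa_word y) w t) X)"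
proof (induction w arbitrary: X)
  case Nil
  then show ?case by (simp add: lin_ext_fa_word_at)
next
  case (Cons g w)
  have "Nabla_word X (g # w) = (\<lambda>t. lin_ext (\<lambda>z. Nabla_word (fa_word z) w t) (nabla_op g X))"
    using Cons.IH[OF finsupp_nabla_op[OF Cons.prems]] by simp
  also have "\<dots> = (\<lambda>t. lin_ext (\<lambda>y. lin_ext (\<lambda>z. Nabla_word (fa_word z) w t) (nabla_word g y)) X)"
    by (rule ext, simp only: nabla_op_eq, rule lin_ext_lin_ext[OF Cons.prems]) simp
  also have "\<dots> = (\<lambda>t. lin_ext (\<lambda>y. Nabla_word (fa_word y) (g # w) t) X)"
    using Cons.IH[of "nabla_word g _"] by simp
  finally show ?case .
qed

lemma delta_word_nonzero_length: "delta_word g z v \<noteq> 0 \<Longrightarrow> length v + 1 = length z"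
  unfolding delta_word_eq_comb by (metis fa_of_comb_nonzeroD delta_comb_length)

lemma nabla_word_nonzero_length: "nabla_word g z v \<noteq> 0 \<Longrightarrow> length v + 1 = length z"
  unfolding nabla_word_eq_comb by (metis fa_of_comb_nonzeroD nabla_comb_length)

lemma Delta_word_nonzeroE:
  assumes "Delta_word w X v \<noteq> 0"
  obtains z where "X z \<noteq> 0" "length z = length v + length w"
  using assms
proof (induction w arbitrary: v thesis)
  case (Cons g w)
  then obtain y where y: "Delta_word w X y \<noteq> 0" "delta_word g y v \<noteq> 0"
    by (auto simp: delta_op_eq elim: lin_ext_nonzeroE)
  obtain z where "X z \<noteq> 0" "length z = length y + length w"
    using Cons.IH y(1) by blast
  with delta_word_nonzero_length[OF y(2)] show ?case by (intro Cons.prems(1)) auto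
qed simp

lemma Nabla_word_nonzeroE:
  assumes "Nabla_word X w v \<noteq> 0"
  obtains z where "X z \<noteq> 0" "length z = length v + length w"
  using assms
proof (induction w arbitrary: X v thesis)
  case (Cons g w)
  then obtain y where y: "nabla_op g X y \<noteq> 0" "length y = length v + length w"
    by auto
  then obtain z where "X z \<noteq> 0" "nabla_word g z y \<noteq> 0"
    by (auto simp: nabla_op_eq elim: lin_ext_nonzeroE)
  with y(2) nabla_word_nonzero_length[of g z y] show ?case by (intro Cons.prems(1)) auto
qed simp

section \<open>The pairing of words\<close>

definition wpair :: "(nat \<times> nat) list \<Rightarrow> (nat \<times> nat) list \<Rightarrow> rat" where
  "wpair u v = Delta_word u (fa_word v) []"

lemma Delta_word_Nil_eq_lin_ext: "finsupp Z \<Longrightarrow> Delta_word u Z [] = lin_ext (wpair u) Z"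
  by (subst Delta_word_lin) (simp_all add: wpair_def[abs_def])

lemma wpair_Nil_left: "wpair [] v = (if v = [] then 1 else 0)"
  by (simp add: wpair_def fa_word_def)

lemma wpair_snoc: "wpair (w @ [a]) v = (\<Sum>(c, t)\<leftarrow>delta_comb a v. c * wpair w t)"
proof -
  have "wpair (w @ [a]) v = Delta_word w (fa_of_comb (delta_comb a v)) []"
    by (simp add: wpair_def Delta_word_append delta_word_eq_comb)
  also have "\<dots> = lin_ext (wpair w) (fa_of_comb (delta_comb a v))"
    by (simp add: Delta_word_Nil_eq_lin_ext)
  finally show ?thesis by (simp add: lin_ext_fa_of_comb)
qed

lemma wpair_Nil_right: "wpair u [] = (if u = [] then 1 else 0)"
  by (cases u rule: rev_exhaust) (auto simp: wpair_Nil_left wpair_snoc)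

lemma wpair_nonzero_length: "wpair u v \<noteq> 0 \<Longrightarrow> length u = length v"
  unfolding wpair_def by (erule Delta_word_nonzeroE) (simp add: fa_word_def split: if_splits)

lemma delta_comb_gen_map: "delta_comb (gen_map (tsp c) a) (map (gen_map (tsp c)) v) =
   map (\<lambda>(x, t). (x, map (gen_map (tsp c)) t)) (delta_comb a v)"
  by (induction v) (auto simp: dgen_gen_map_tsp gen_map_tsp_conj split_def)

lemma wpair_gen_map_tsp: "wpair (map (gen_map (tsp c)) u) (map (gen_map (tsp c)) v) = wpair u v"
proof (induction u arbitrary: v rule: rev_induct)
  case (snoc a w)
  then show ?case by (simp add: wpair_snoc delta_comb_gen_map comp_def split_def)
qed (simp add: wpair_Nil_left)

lemma delta_comb_snoc: "delta_comb a (v @ [b]) =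
   map (\<lambda>(c, t). (c, t @ [b])) (delta_comb a v) @ [(dgen a b, map (gen_map (tsp a)) v)]"
  by (induction v) (auto simp: split_def)

text \<open>The term of wpair (w a) (v b) in which the last letters cancel each other; it is
  symmetric because dgen a b \<noteq> 0 forces tsp a = tsp b.\<close>
lemma dgen_wpair_exchange:
  "dgen a b * wpair w (map (gen_map (tsp a)) v) = dgen b a * wpair (map (gen_map (tsp b)) w) v"
proof (cases "dgen a b = 0")
  case False
  then have "tsp a = tsp b" by (rule tsp_eq_if_dgen_nonzero)
  then show ?thesis
    using wpair_gen_map_tsp[of a w "map (gen_map (tsp a)) v"] by (simp add: dgen_commute)
qed (simp add: dgen_commute)

lemma wpair_snoc_right: "wpair u (v @ [b]) = (\<Sum>(c, t)\<leftarrow>delta_comb b u. c * wpair t v)"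
proof (induction u arbitrary: v rule: rev_induct)
  case (snoc a w)
  have "wpair (w @ [a]) (v @ [b]) =
      (\<Sum>(c, t)\<leftarrow>delta_comb a v. c * wpair w (t @ [b])) + dgen a b * wpair w (map (gen_map (tsp a)) v)"
    by (simp add: wpair_snoc delta_comb_snoc comp_def split_def)
  also have "(\<Sum>(c, t)\<leftarrow>delta_comb a v. c * wpair w (t @ [b])) =
      (\<Sum>x\<leftarrow>delta_comb a v. \<Sum>y\<leftarrow>delta_comb b w. fst x * fst y * wpair (snd y) (snd x))"
    by (simp add: snoc split_def sum_list_const_mult mult.assoc)
  also have "\<dots> = (\<Sum>y\<leftarrow>delta_comb b w. \<Sum>x\<leftarrow>delta_comb a v. fst x * fst y * wpair (snd y) (snd x))"
    by (rule sum_list_commute)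
  also have "\<dots> = (\<Sum>(c, t)\<leftarrow>delta_comb b w. c * wpair (t @ [a]) v)"
    by (simp add: wpair_snoc split_def sum_list_const_mult algebra_simps)
  finally show ?case
    by (simp add: delta_comb_snoc dgen_wpair_exchange comp_def split_def)
qed (simp add: wpair_Nil_left)

lemma wpair_commute: "wpair u v = wpair v u"
proof (induction v arbitrary: u rule: rev_induct)
  case Nil
  then show ?case by (simp add: wpair_Nil_left wpair_Nil_right)
next
  case (snoc b v)
  then show ?case by (simp add: wpair_snoc_right wpair_snoc)
qed

lemma sigma_word_snoc: "sigma_word (w @ [a]) = sigma_word w \<circ> tsp a"
  by (induction w) auto

lemma gen_map_id [simp]: "gen_map id g = g"
  by (simp add: gen_map_def)

lemma sum_list_nabla_comb_snoc: "(\<Sum>x\<leftarrow>nabla_comb g (w @ [a]). (f x :: 'a::comm_monoid_add)) =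
   (\<Sum>(c, t)\<leftarrow>nabla_comb (gen_map (tsp a) g) w. f (c, t @ [a])) + f (dgen g a, w)"
proof (induction w arbitrary: f)
  case (Cons h w)
  have "(\<Sum>x\<leftarrow>nabla_comb g ((h # w) @ [a]). f x) =
      (\<Sum>x\<leftarrow>nabla_comb g (w @ [a]). f (case x of (c, t) \<Rightarrow> (c, h # t)))
      + f (dgen (gen_map (sigma_word (w @ [a])) g) h, w @ [a])"
    by (simp add: comp_def)
  also have "\<dots> = (\<Sum>(c, t)\<leftarrow>nabla_comb (gen_map (tsp a) g) w. f (c, h # t @ [a]))
      + f (dgen (gen_map (sigma_word w) (gen_map (tsp a) g)) h, w @ [a]) + f (dgen g a, h # w)"
    by (simp add: Cons sigma_word_snoc gen_map_def add_ac)
  also have "\<dots> = (\<Sum>(c, t)\<leftarrow>nabla_comb (gen_map (tsp a) g) (h # w). f (c, t @ [a])) + f (dgen g a, h # w)"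
    by (simp add: comp_def split_def)
  finally show ?case .
qed simp

lemma wpair_Cons_right: "wpair u (g # v) = (\<Sum>(c, t)\<leftarrow>nabla_comb g u. c * wpair t v)"
proof (induction u arbitrary: g v rule: rev_induct)
  case (snoc a w)
  have "wpair (w @ [a]) (g # v) =
      dgen a g * wpair w v + (\<Sum>(c, t)\<leftarrow>delta_comb a v. c * wpair w (gen_map (tsp a) g # t))"
    by (simp add: wpair_snoc comp_def split_def)
  also have "(\<Sum>(c, t)\<leftarrow>delta_comb a v. c * wpair w (gen_map (tsp a) g # t)) =
     (\<Sum>x\<leftarrow>delta_comb a v. \<Sum>y\<leftarrow>nabla_comb (gen_map (tsp a) g) w. fst x * fst y * wpair (snd y) (snd x))"
    by (simp add: snoc split_def sum_list_const_mult mult.assoc)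
  also have "\<dots> = (\<Sum>y\<leftarrow>nabla_comb (gen_map (tsp a) g) w. \<Sum>x\<leftarrow>delta_comb a v. fst x * fst y * wpair (snd y) (snd x))"
    by (rule sum_list_commute)
  also have "\<dots> = (\<Sum>(c, t)\<leftarrow>nabla_comb (gen_map (tsp a) g) w. c * wpair (t @ [a]) v)"
    by (simp add: wpair_snoc split_def sum_list_const_mult algebra_simps)
  finally show ?case
    by (simp add: sum_list_nabla_comb_snoc[where f = "\<lambda>(c, t). c * wpair t v"] dgen_commute algebra_simps)
qed (simp add: wpair_Nil_left)

lemma Nabla_word_fa_word_Nil: "Nabla_word (fa_word u) v [] = wpair u v"
proof (induction v arbitrary: u)
  case Nil
  then show ?case by (auto simp: fa_word_def wpair_Nil_right)
next
  case (Cons g w)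
  have "Nabla_word (fa_word u) (g # w) [] = Nabla_word (fa_of_comb (nabla_comb g u)) w []"
    by (simp add: nabla_word_eq_comb)
  also have "\<dots> = lin_ext (\<lambda>y. Nabla_word (fa_word y) w []) (fa_of_comb (nabla_comb g u))"
    by (subst Nabla_word_lin) simp_all
  also have "\<dots> = wpair u (g # w)" by (simp add: lin_ext_fa_of_comb Cons wpair_Cons_right)
  finally show ?case .
qed

lemma Nabla_word_Nil_eq_lin_ext: "finsupp X \<Longrightarrow> Nabla_word X t [] = lin_ext (\<lambda>y. wpair y t) X"
  by (subst Nabla_word_lin) (simp_all add: Nabla_word_fa_word_Nil)

section \<open>The operators Delta_ab satisfy the relations of E_n\<close>

definition fa_prefix :: "nat \<times> nat \<Rightarrow> fa \<Rightarrow> fa" where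
  "fa_prefix h Z = (\<lambda>v. case v of [] \<Rightarrow> 0 | h' # v' \<Rightarrow> if h' = h then Z v' else 0)"

lemma fa_prefix_eq_lin_ext: "finsupp Z \<Longrightarrow> fa_prefix h Z = (\<lambda>v. lin_ext (\<lambda>w. fa_word (h # w) v) Z)"
proof (rule ext)
  fix v assume Z: "finsupp Z"
  show "fa_prefix h Z v = lin_ext (\<lambda>w. fa_word (h # w) v) Z"
  proof (cases v)
    case (Cons h' v')
    show ?thesis
    proof (cases "h' = h")
      case True
      have "lin_ext (\<lambda>w. fa_word (h # w) v) Z = lin_ext (\<lambda>w. fa_word w v') Z"
        by (rule lin_ext_cong) (auto simp: fa_word_def Cons True)
      then show ?thesis using lin_ext_fa_word_at[OF Z] by (simp add: fa_prefix_def Cons True)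
    qed (simp add: fa_prefix_def Cons fa_word_def)
  qed (simp add: fa_prefix_def fa_word_def)
qed

lemma fa_prefix_zero [simp]: "fa_prefix h (\<lambda>_. 0) = (\<lambda>_. 0)"
  by (simp add: fa_prefix_def fun_eq_iff split: list.splits)

lemma finsupp_fa_prefix: "finsupp Z \<Longrightarrow> finsupp (fa_prefix h Z)"
  by (simp add: fa_prefix_eq_lin_ext finsupp_lin_ext)

lemma delta_word_Cons:
  "delta_word a (g # w) = (\<lambda>v. dgen a g * fa_word w v + fa_prefix (gen_map (tsp a) g) (delta_word a w) v)"
  by (auto simp: fa_prefix_def split: list.splits)

lemma delta_op_add:
  "finsupp A \<Longrightarrow> finsupp C \<Longrightarrow> delta_op x (\<lambda>v. A v + C v) = (\<lambda>v. delta_op x A v + delta_op x C v)"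
  by (simp add: delta_op_eq lin_ext_add)

lemma delta_op_smult: "delta_op x (\<lambda>v. c * A v) = (\<lambda>v. c * delta_op x A v)"
  by (simp add: delta_op_eq lin_ext_smult)

lemma delta_op_fa_prefix: "finsupp Z \<Longrightarrow>
  delta_op x (fa_prefix h Z) = (\<lambda>v. dgen x h * Z v + fa_prefix (gen_map (tsp x) h) (delta_op x Z) v)"
proof (rule ext)
  fix v assume Z: "finsupp Z"
  have "delta_op x (fa_prefix h Z) v = lin_ext (\<lambda>w. delta_word x (h # w) v) Z"
    by (simp add: delta_op_eq fa_prefix_eq_lin_ext[OF Z] lin_ext_lin_ext[OF Z])
  also have "\<dots> = lin_ext (\<lambda>w. dgen x h * fa_word w v) Z
      + lin_ext (\<lambda>w. fa_prefix (gen_map (tsp x) h) (delta_word x w) v) Z"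
    by (simp only: delta_word_Cons lin_ext_fun_add)
  also have "lin_ext (\<lambda>w. dgen x h * fa_word w v) Z = dgen x h * Z v"
    by (simp add: lin_ext_fun_smult lin_ext_fa_word_at[OF Z])
  also have "lin_ext (\<lambda>w. fa_prefix (gen_map (tsp x) h) (delta_word x w) v) Z
      = fa_prefix (gen_map (tsp x) h) (delta_op x Z) v"
    by (auto simp: fa_prefix_def delta_op_eq split: list.splits)
  finally show "delta_op x (fa_prefix h Z) v = dgen x h * Z v + fa_prefix (gen_map (tsp x) h) (delta_op x Z) v" .
qed

definition delta2 :: "nat \<times> nat \<Rightarrow> nat \<times> nat \<Rightarrow> (nat \<times> nat) list \<Rightarrow> fa" where
  "delta2 x y q = delta_op x (delta_word y q)"

lemma delta2_Nil [simp]: "delta2 x y [] = (\<lambda>_. 0)"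
  by (simp add: delta2_def delta_op_eq)

lemma delta2_Cons: "delta2 x y (g # w) = (\<lambda>v.
      dgen y g * delta_word x w v + dgen x (gen_map (tsp y) g) * delta_word y w v
    + fa_prefix (gen_map (tsp x) (gen_map (tsp y) g)) (delta2 x y w) v)"
proof -
  have "delta2 x y (g # w) =
      delta_op x (\<lambda>v. dgen y g * fa_word w v + fa_prefix (gen_map (tsp y) g) (delta_word y w) v)"
    by (simp only: delta2_def delta_word_Cons)
  also have "\<dots> = (\<lambda>v. delta_op x (\<lambda>v. dgen y g * fa_word w v) v
      + delta_op x (fa_prefix (gen_map (tsp y) g) (delta_word y w)) v)"
    by (rule delta_op_add) (simp_all add: finsupp_smult finsupp_fa_prefix)
  finally show ?thesis
    by (simp add: delta_op_smult delta_op_fa_prefix delta2_def algebra_simps)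
qed

lemma delta_word_antisym: "i \<noteq> j \<Longrightarrow> delta_word (i, j) q v + delta_word (j, i) q v = 0"
proof (induction q arbitrary: v)
  case (Cons g w)
  have "dgen (j, i) g = - dgen (i, j) g" using dgen_swap[of "(i, j)"] Cons.prems by simp
  then show ?case using Cons by (auto simp: tsp_swap split: list.splits)
qed simp

lemma delta2_self: "fst a \<noteq> snd a \<Longrightarrow> delta2 a a q = (\<lambda>_. 0)"
proof (induction q)
  case (Cons g w)
  have "dgen a (gen_map (tsp a) g) = - dgen a g"
    using Cons.prems by (cases a) (auto simp: dgen_def gen_map_def tsp_def prod_eq_iff split: if_splits)
  then show ?case using Cons by (simp add: delta2_Cons)
qed simp

lemma delta2_commute:
  assumes "distinct [i, j, k, l]"
  shows "delta2 (i, j) (k, l) q = delta2 (k, l) (i, j) q"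
proof (induction q)
  case (Cons g w)
  have fix_other: "gen_map (tsp (i, j)) (k, l) = (k, l)" "gen_map (tsp (k, l)) (i, j) = (i, j)"
    using assms by (auto simp: gen_map_def tsp_Pair)
  have "tsp (i, j) (tsp (k, l) x) = tsp (k, l) (tsp (i, j) x)" for x
    using assms tsp_commute_disjoint[of i j k l] by simp
  then have "gen_map (tsp (i, j)) (gen_map (tsp (k, l)) g) = gen_map (tsp (k, l)) (gen_map (tsp (i, j)) g)"
    by (simp add: gen_map_def)
  with Cons fix_other show ?case by (simp add: delta2_Cons dgen_gen_map_tsp_right algebra_simps)
qed simp

lemma delta2_cyclic:
  assumes "distinct [i, j, k]"
  shows "(\<lambda>v. delta2 (i, j) (j, k) q v + delta2 (j, k) (k, i) q v + delta2 (k, i) (i, j) q v) = (\<lambda>_. 0)"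
proof (induction q)
  case (Cons g w)
  have s: "gen_map (tsp (i, j)) (k, i) = (k, j)" "gen_map (tsp (j, k)) (i, j) = (i, k)"
    "gen_map (tsp (k, i)) (j, k) = (j, i)"
    using assms by (auto simp: gen_map_def tsp_Pair)
  have d: "dgen (k, j) g = - dgen (j, k) g" "dgen (i, k) g = - dgen (k, i) g" "dgen (j, i) g = - dgen (i, j) g"
    using assms dgen_swap[of "(j, k)"] dgen_swap[of "(k, i)"] dgen_swap[of "(i, j)"] by auto
  have "tsp (i, j) (tsp (j, k) x) = tsp (j, k) (tsp (k, i) x)"
    "tsp (k, i) (tsp (i, j) x) = tsp (j, k) (tsp (k, i) x)" for x
    using assms by (simp_all add: tsp_Pair)
  then have e: "gen_map (tsp (i, j)) (gen_map (tsp (j, k)) g) = gen_map (tsp (j, k)) (gen_map (tsp (k, i)) g)"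
    "gen_map (tsp (k, i)) (gen_map (tsp (i, j)) g) = gen_map (tsp (j, k)) (gen_map (tsp (k, i)) g)"
    by (simp_all add: gen_map_def)
  let ?h = "gen_map (tsp (j, k)) (gen_map (tsp (k, i)) g)"
  show ?case
  proof (rule ext)
    fix v
    have "delta2 (i, j) (j, k) (g # w) v + delta2 (j, k) (k, i) (g # w) v + delta2 (k, i) (i, j) (g # w) v
      = (dgen (j, k) g + dgen (k, i) (gen_map (tsp (i, j)) g)) * delta_word (i, j) w v
      + (dgen (i, j) (gen_map (tsp (j, k)) g) + dgen (k, i) g) * delta_word (j, k) w v
      + (dgen (j, k) (gen_map (tsp (k, i)) g) + dgen (i, j) g) * delta_word (k, i) w v
      + fa_prefix ?h (\<lambda>v. delta2 (i, j) (j, k) w v + delta2 (j, k) (k, i) w v + delta2 (k, i) (i, j) w v) v"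
      by (simp only: delta2_Cons e) (simp add: fa_prefix_def algebra_simps split: list.splits)
    then show "delta2 (i, j) (j, k) (g # w) v + delta2 (j, k) (k, i) (g # w) v + delta2 (k, i) (i, j) (g # w) v = 0"
      using Cons by (simp add: dgen_gen_map_tsp_right s d)
  qed
qed simp

lemma fa_word_append_apply: "fa_word (s @ t) w =
   (if length s \<le> length w \<and> s = take (length s) w then fa_word t (drop (length s) w) else 0)"
  by (auto simp: fa_word_def) (metis append_take_drop_id)

lemma fa_mult_eq_lin_ext:
  assumes X: "finsupp X" and Y: "finsupp Y"
  shows "fa_mult X Y = (\<lambda>w. lin_ext (\<lambda>s. lin_ext (\<lambda>t. fa_word (s @ t) w) Y) X)"
proof (rule ext)
  fix w :: "(nat \<times> nat) list"
  define P where "P = (\<lambda>k. take k w) ` {0..length w}"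
  have inner: "lin_ext (\<lambda>t. fa_word (s @ t) w) Y = (if s \<in> P then Y (drop (length s) w) else 0)" for s
  proof -
    have "(length s \<le> length w \<and> s = take (length s) w) = (s \<in> P)"
      by (auto simp: P_def)
    then show ?thesis by (simp add: fa_word_append_apply lin_ext_fa_word_at[OF Y])
  qed
  let ?S = "{s. X s \<noteq> 0} \<union> P"
  have S: "finite ?S" using X by (simp add: finsupp_def P_def)
  have "lin_ext (\<lambda>s. lin_ext (\<lambda>t. fa_word (s @ t) w) Y) X
      = (\<Sum>s\<in>?S. X s * (if s \<in> P then Y (drop (length s) w) else 0))"
    by (simp only: inner, rule lin_ext_superset[OF S]) auto
  also have "\<dots> = (\<Sum>s\<in>P. X s * Y (drop (length s) w))"
    by (rule sum.mono_neutral_cong_right) (use S in auto)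
  also have "\<dots> = (\<Sum>k\<in>{0..length w}. X (take k w) * Y (drop k w))"
  proof -
    have "inj_on (\<lambda>k. take k w) {0..length w}"
      by (rule inj_onI) (metis atLeastAtMost_iff length_take min.absorb2)
    then show ?thesis unfolding P_def
      by (subst sum.reindex) (auto intro!: sum.cong simp: min_def)
  qed
  finally show "fa_mult X Y w = lin_ext (\<lambda>s. lin_ext (\<lambda>t. fa_word (s @ t) w) Y) X"
    by (simp add: fa_mult_def)
qed

lemma finsupp_fa_mult: "finsupp X \<Longrightarrow> finsupp Y \<Longrightarrow> finsupp (fa_mult X Y)"
  by (simp add: fa_mult_eq_lin_ext finsupp_lin_ext)

lemma lin_ext_fa_mult:
  assumes X: "finsupp X" and Y: "finsupp Y"
  shows "lin_ext g (fa_mult X Y) = lin_ext (\<lambda>s. lin_ext (\<lambda>t. g (s @ t)) Y) X"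
proof -
  have "lin_ext g (fa_mult X Y) = lin_ext g (\<lambda>w. lin_ext (\<lambda>s. lin_ext (\<lambda>t. fa_word (s @ t) w) Y) X)"
    by (simp add: fa_mult_eq_lin_ext[OF X Y])
  also have "\<dots> = lin_ext (\<lambda>s. lin_ext g (\<lambda>w. lin_ext (\<lambda>t. fa_word (s @ t) w) Y)) X"
    by (rule lin_ext_lin_ext[OF X]) (simp add: finsupp_lin_ext[OF Y])
  also have "\<dots> = lin_ext (\<lambda>s. lin_ext (\<lambda>t. g (s @ t)) Y) X"
    by (simp add: lin_ext_lin_ext[OF Y])
  finally show ?thesis .
qed

lemma fa_mult_fa_word: "fa_mult (fa_word s) (fa_word t) = fa_word (s @ t)"
  by (simp add: fa_mult_eq_lin_ext)

definition fa_pair :: "fa \<Rightarrow> fa \<Rightarrow> rat" where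
  "fa_pair P Q = lin_ext (\<lambda>u. lin_ext (wpair u) Q) P"

lemma fa_pair_commute: "fa_pair P Q = fa_pair Q P"
  unfolding fa_pair_def by (subst lin_ext_commute) (simp add: wpair_commute)

lemma fa_pair_linear_left:
  "finsupp P \<Longrightarrow> finsupp P' \<Longrightarrow> fa_pair (fa_add (fa_smult c P) P') Q = c * fa_pair P Q + fa_pair P' Q"
  by (simp add: fa_pair_def fa_add_def fa_smult_def lin_ext_add finsupp_smult lin_ext_smult)

lemma fa_pair_linear_right:
  "finsupp P \<Longrightarrow> finsupp P' \<Longrightarrow> fa_pair Q (fa_add (fa_smult c P) P') = c * fa_pair Q P + fa_pair Q P'"
  unfolding fa_pair_commute[of Q] by (rule fa_pair_linear_left)

lemma finsupp_fa_add_smult: "finsupp P \<Longrightarrow> finsupp P' \<Longrightarrow> finsupp (fa_add (fa_smult c P) P')"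
  by (simp add: fa_add_def fa_smult_def finsupp_add finsupp_smult)

lemma fa_pair_diff_left:
  "finsupp P \<Longrightarrow> finsupp P' \<Longrightarrow> fa_pair (fa_sub P P') Q = fa_pair P Q - fa_pair P' Q"
  using fa_pair_linear_left[of P' P "-1" Q]
  by (simp add: fa_add_def fa_smult_def fa_sub_def)

lemma finsupp_Delta: "finsupp P \<Longrightarrow> finsupp Q \<Longrightarrow> finsupp (Delta P Q)"
  unfolding Delta_eq by (rule finsupp_lin_ext) (simp_all add: finsupp_Delta_word)

lemma finsupp_Nabla: "finsupp P \<Longrightarrow> finsupp Q \<Longrightarrow> finsupp (Nabla Q P)"
  unfolding Nabla_eq by (rule finsupp_lin_ext) (simp_all add: finsupp_Nabla_word)

lemma Delta_Nil_eq_fa_pair: "finsupp Q \<Longrightarrow> Delta P Q [] = fa_pair P Q"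
  by (simp add: Delta_eq fa_pair_def Delta_word_Nil_eq_lin_ext)

lemma lin_ext_wpair_flip: "lin_ext (\<lambda>y. wpair y t) X = lin_ext (wpair t) X"
  by (rule lin_ext_cong) (rule wpair_commute)

lemma Nabla_Nil_eq_fa_pair: "finsupp P \<Longrightarrow> Nabla P Q [] = fa_pair P Q"
  unfolding fa_pair_def Nabla_eq
  by (simp add: Nabla_word_Nil_eq_lin_ext lin_ext_commute[of "\<lambda>s y. wpair y s" P Q])

lemma fa_pair_Delta_eq:
  assumes P2: "finsupp P2" and Q: "finsupp Q"
  shows "fa_pair P1 (Delta P2 Q) = lin_ext (\<lambda>s. lin_ext (\<lambda>t. lin_ext (wpair (s @ t)) Q) P2) P1"
proof -
  have "lin_ext (wpair s) (Delta P2 Q) = lin_ext (\<lambda>t. lin_ext (wpair (s @ t)) Q) P2" for s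
  proof -
    have "lin_ext (wpair s) (Delta P2 Q) = lin_ext (\<lambda>t. lin_ext (wpair s) (Delta_word t Q)) P2"
      unfolding Delta_eq by (rule lin_ext_lin_ext[OF P2]) (simp add: finsupp_Delta_word Q)
    also have "\<dots> = lin_ext (\<lambda>t. lin_ext (wpair (s @ t)) Q) P2"
      by (simp add: Delta_word_Nil_eq_lin_ext[symmetric] finsupp_Delta_word Q Delta_word_append)
    finally show ?thesis .
  qed
  then show ?thesis by (simp add: fa_pair_def)
qed

lemma fa_pair_Nabla_eq:
  assumes P1: "finsupp P1" and Q: "finsupp Q"
  shows "fa_pair P2 (Nabla Q P1) = lin_ext (\<lambda>t. lin_ext (\<lambda>s. lin_ext (wpair (s @ t)) Q) P1) P2"
proof -
  have "lin_ext (wpair t) (Nabla Q P1) = lin_ext (\<lambda>s. lin_ext (wpair (s @ t)) Q) P1" for t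
  proof -
    have "lin_ext (wpair t) (Nabla Q P1) = lin_ext (\<lambda>s. lin_ext (wpair t) (Nabla_word Q s)) P1"
      unfolding Nabla_eq by (rule lin_ext_lin_ext[OF P1]) (simp add: finsupp_Nabla_word Q)
    also have "\<dots> = lin_ext (\<lambda>s. lin_ext (wpair (s @ t)) Q) P1"
      by (simp add: Nabla_word_Nil_eq_lin_ext[symmetric] finsupp_Nabla_word Q Nabla_word_append
          lin_ext_wpair_flip[symmetric])
    finally show ?thesis .
  qed
  then show ?thesis by (simp add: fa_pair_def)
qed

lemma fa_pair_fa_mult_eq_Delta:
  "finsupp P1 \<Longrightarrow> finsupp P2 \<Longrightarrow> finsupp Q \<Longrightarrow> fa_pair (fa_mult P1 P2) Q = fa_pair P1 (Delta P2 Q)"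
  by (subst fa_pair_Delta_eq) (simp_all add: fa_pair_def lin_ext_fa_mult)

lemma fa_pair_Delta_eq_Nabla:
  "finsupp P1 \<Longrightarrow> finsupp P2 \<Longrightarrow> finsupp Q \<Longrightarrow> fa_pair P1 (Delta P2 Q) = fa_pair P2 (Nabla Q P1)"
  unfolding fa_pair_Delta_eq fa_pair_Nabla_eq by (rule lin_ext_commute)

section \<open>The defining ideal lies in the radical\<close>

definition Delta_comb_vanishes :: "lincomb \<Rightarrow> bool" where
  "Delta_comb_vanishes L \<longleftrightarrow> (\<forall>q z. (\<Sum>(c, t)\<leftarrow>L. c * Delta_word t (fa_word q) z) = 0)"

lemma Delta_comb_vanishes_finsupp:
  assumes L: "Delta_comb_vanishes L" and X: "finsupp X"
  shows "(\<lambda>z. \<Sum>(c, t)\<leftarrow>L. c * Delta_word t X z) = (\<lambda>_. 0)"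
proof (rule ext)
  fix z
  have "(\<Sum>(c, t)\<leftarrow>L. c * Delta_word t X z)
      = lin_ext (\<lambda>y. \<Sum>(c, t)\<leftarrow>L. c * Delta_word t (fa_word y) z) X"
    by (subst Delta_word_lin[OF X]) (simp add: lin_ext_fun_sum_list lin_ext_fun_smult split_def)
  also have "\<dots> = 0" using L by (simp add: Delta_comb_vanishes_def)
  finally show "(\<Sum>(c, t)\<leftarrow>L. c * Delta_word t X z) = 0" .
qed

lemma wpair_infix_comb:
  assumes L: "Delta_comb_vanishes L"
  shows "(\<Sum>(c, t)\<leftarrow>L. c * wpair (u @ t @ v) q) = 0"
proof -
  let ?X = "Delta_word v (fa_word q)"
  have X: "finsupp ?X" by (simp add: finsupp_Delta_word)
  have "(\<Sum>(c, t)\<leftarrow>L. c * wpair (u @ t @ v) q) = (\<Sum>(c, t)\<leftarrow>L. c * lin_ext (wpair u) (Delta_word t ?X))"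
    by (simp add: wpair_def Delta_word_append Delta_word_Nil_eq_lin_ext finsupp_Delta_word)
  also have "\<dots> = lin_ext (wpair u) (\<lambda>z. \<Sum>(c, t)\<leftarrow>L. c * Delta_word t ?X z)"
    using lin_ext_sum_list[of L "\<lambda>l z. fst l * Delta_word (snd l) ?X z" "wpair u"]
    by (simp add: split_def finsupp_smult finsupp_Delta_word X lin_ext_smult)
  also have "\<dots> = 0" by (simp add: Delta_comb_vanishes_finsupp[OF L X])
  finally show ?thesis .
qed

lemma fa_pair_sandwich_comb:
  assumes "Delta_comb_vanishes L"
  shows "fa_pair (fa_mult (fa_mult (fa_word u) (fa_of_comb L)) (fa_word v)) Q = 0"
proof -
  have "fa_pair (fa_mult (fa_mult (fa_word u) (fa_of_comb L)) (fa_word v)) Q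
      = (\<Sum>(c, t)\<leftarrow>L. c * lin_ext (wpair (u @ t @ v)) Q)"
    by (simp add: fa_pair_def lin_ext_fa_mult finsupp_fa_mult lin_ext_fa_of_comb)
  also have "\<dots> = lin_ext (\<lambda>q. \<Sum>(c, t)\<leftarrow>L. c * wpair (u @ t @ v) q) Q"
    by (simp add: lin_ext_fun_sum_list lin_ext_fun_smult split_def)
  also have "\<dots> = 0" by (simp add: wpair_infix_comb[OF assms])
  finally show ?thesis .
qed

lemma fk_rels_Delta_comb_vanishes:
  assumes "r \<in> fk_rels n"
  obtains L where "r = fa_of_comb L" "Delta_comb_vanishes L"
  using assms unfolding fk_rels_def
proof (elim UnE CollectE exE conjE)
  fix i j assume r: "r = fa_add (fa_gen i j) (fa_gen j i)" and "(i, j) \<in> fk_gens n"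
  then have "i \<noteq> j" by (simp add: fk_gens_def)
  then show thesis
    using that[of "[(1, [(i, j)]), (1, [(j, i)])]"] delta_word_antisym
    by (simp add: r fa_add_def fa_gen_def Delta_comb_vanishes_def)
next
  fix i j assume r: "r = fa_mult (fa_gen i j) (fa_gen i j)" and "(i, j) \<in> fk_gens n"
  then have "fst (i, j) \<noteq> snd (i, j)" by (simp add: fk_gens_def)
  then show thesis
    using that[of "[(1, [(i, j), (i, j)])]"] delta2_self
    by (simp add: r fa_gen_def fa_mult_fa_word Delta_comb_vanishes_def delta2_def[symmetric])
next
  fix i j k l
  assume r: "r = fa_sub (fa_mult (fa_gen i j) (fa_gen k l)) (fa_mult (fa_gen k l) (fa_gen i j))"
    and "distinct [i, j, k, l]"
  then show thesis
    using that[of "[(1, [(i, j), (k, l)]), (-1, [(k, l), (i, j)])]"] delta2_commute[of i j k l]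
    by (simp add: r fa_gen_def fa_mult_fa_word fa_sub_def Delta_comb_vanishes_def delta2_def[symmetric])
next
  fix i j k
  assume r: "r = fa_add (fa_add (fa_mult (fa_gen i j) (fa_gen j k)) (fa_mult (fa_gen j k) (fa_gen k i)))
      (fa_mult (fa_gen k i) (fa_gen i j))" and "distinct [i, j, k]"
  then have "delta2 (i, j) (j, k) q z + delta2 (j, k) (k, i) q z + delta2 (k, i) (i, j) q z = 0" for q z
    using delta2_cyclic[of i j k q] by (simp add: fun_eq_iff)
  then show thesis
    using that[of "[(1, [(i, j), (j, k)]), (1, [(j, k), (k, i)]), (1, [(k, i), (i, j)])]"]
    by (simp add: r fa_gen_def fa_mult_fa_word fa_add_def Delta_comb_vanishes_def
        delta2_def[symmetric] add.assoc[symmetric])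
qed

lemma fk_ideal_radical: "I \<in> fk_ideal n \<Longrightarrow> finsupp I \<and> (\<forall>Q. fa_pair I Q = 0)"
proof (induction rule: fk_ideal.induct)
  case (gen r u v)
  from gen.hyps(1) obtain L where "r = fa_of_comb L" "Delta_comb_vanishes L"
    by (rule fk_rels_Delta_comb_vanishes)
  then show ?case by (simp add: fa_pair_sandwich_comb finsupp_fa_mult)
next
  case (add a b)
  then show ?case by (simp add: fa_pair_def fa_add_def lin_ext_add finsupp_add)
next
  case (smult a c)
  then show ?case by (simp add: fa_pair_def fa_smult_def lin_ext_smult finsupp_smult)
qed (simp add: fa_pair_def)

lemma fa_pair_fk_cong:
  assumes "finsupp P" "finsupp P'" "finsupp Q" "finsupp Q'" "fk_cong n P P'" "fk_cong n Q Q'"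
  shows "fa_pair P Q = fa_pair P' Q'"
proof -
  have "fa_pair P Q = fa_pair P' Q"
    using fk_ideal_radical[of "fa_sub P P'" n] fa_pair_diff_left[of P P' Q] assms
    by (simp add: fk_cong_def)
  also have "\<dots> = fa_pair P' Q'"
    using fk_ideal_radical[of "fa_sub Q Q'" n] fa_pair_diff_left[of Q Q' P'] assms
    by (simp add: fk_cong_def fa_pair_commute[of P'])
  finally show ?thesis .
qed

lemma Delta_homogeneous_nonempty:
  assumes "fa_homog d P" "fa_homog d Q" "v \<noteq> []"
  shows "Delta P Q v = 0"
  unfolding Delta_eq
proof (rule lin_ext_eq_0)
  fix w assume "P w \<noteq> 0"
  show "Delta_word w Q v = 0"
  proof (rule ccontr)
    assume "Delta_word w Q v \<noteq> 0"
    then obtain z where "Q z \<noteq> 0" "length z = length v + length w" by (rule Delta_word_nonzeroE)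
    with assms \<open>P w \<noteq> 0\<close> show False by (simp add: fa_homog_def)
  qed
qed

lemma Nabla_homogeneous_nonempty:
  assumes "fa_homog d P" "fa_homog d Q" "v \<noteq> []"
  shows "Nabla P Q v = 0"
  unfolding Nabla_eq
proof (rule lin_ext_eq_0)
  fix w assume "Q w \<noteq> 0"
  show "Nabla_word P w v = 0"
  proof (rule ccontr)
    assume "Nabla_word P w v \<noteq> 0"
    then obtain z where "P z \<noteq> 0" "length z = length v + length w" by (rule Nabla_word_nonzeroE)
    with assms \<open>Q w \<noteq> 0\<close> show False by (simp add: fa_homog_def)
  qed
qed

lemma Delta_Nabla_homogeneous:
  assumes "finsupp P" "finsupp Q" "fa_homog d P" "fa_homog d Q"
  shows "Delta P Q = (\<lambda>v. if v = [] then fa_pair P Q else 0)"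
    and "Nabla P Q = (\<lambda>v. if v = [] then fa_pair P Q else 0)"
  using assms Delta_homogeneous_nonempty[of d P Q] Nabla_homogeneous_nonempty[of d P Q]
  by (auto simp: Delta_Nil_eq_fa_pair Nabla_Nil_eq_fa_pair)

lemma fk_cong_refl: "fk_cong n X X"
  using fk_ideal.zero by (simp add: fk_cong_def fa_sub_def)

lemma fa_homog_0_scalar: "fa_homog 0 (\<lambda>v. if v = [] then c else 0)"
  by (simp add: fa_homog_def)

lemma fa_pair_homogeneous:
  assumes "finsupp Q" "fa_homog d P" "fa_homog e Q"
  shows "fa_pair P Q = (if d = e then Delta P Q [] else 0)"
proof (cases "d = e")
  case False
  have "fa_pair P Q = 0" unfolding fa_pair_def
    using assms False by (auto simp: fa_homog_def intro!: lin_ext_eq_0 dest: wpair_nonzero_length)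
  with False show ?thesis by simp
qed (simp add: Delta_Nil_eq_fa_pair assms)

lemma finsupp_fa_hcomp: "finsupp P \<Longrightarrow> finsupp (fa_hcomp d P)"
  unfolding finsupp_def fa_hcomp_def by (erule finite_subset[rotated]) auto

lemma fa_pair_fa_hcomp_right:
  assumes "finsupp Q"
  shows "fa_pair (fa_hcomp d P) (fa_hcomp d Q) = fa_pair (fa_hcomp d P) Q"
  unfolding fa_pair_def
proof (rule lin_ext_cong)
  fix u assume "fa_hcomp d P u \<noteq> 0"
  then have "length u = d" by (simp add: fa_hcomp_def split: if_splits)
  then show "lin_ext (wpair u) (fa_hcomp d Q) = lin_ext (wpair u) Q"
    unfolding lin_ext_def fa_hcomp_def
    using assms by (intro sum.mono_neutral_cong_left) (auto simp: finsupp_def dest: wpair_nonzero_length)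
qed

lemma sum_fa_hcomp:
  assumes "finite D" "length ` {w. P w \<noteq> 0} \<subseteq> D"
  shows "(\<lambda>y. \<Sum>d\<in>D. fa_hcomp d P y) = P"
proof
  fix y
  have "(\<Sum>d\<in>D. fa_hcomp d P y) = (if length y \<in> D then P y else 0)"
    using assms(1) by (simp add: fa_hcomp_def sum.delta)
  then show "(\<Sum>d\<in>D. fa_hcomp d P y) = P y" using assms(2) by auto
qed

lemma fk_pair_eq_fa_pair:
  assumes P: "finsupp P" and Q: "finsupp Q"
  shows "fk_pair P Q = fa_pair P Q"
proof -
  let ?D = "length ` {w. P w \<noteq> 0}"
  have D: "finite ?D" using P by (simp add: finsupp_def)
  have "fk_pair P Q = (\<Sum>d\<in>?D. fa_pair (fa_hcomp d P) Q)"
    unfolding fk_pair_def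
    by (simp add: Delta_Nil_eq_fa_pair finsupp_fa_hcomp Q fa_pair_fa_hcomp_right)
  also have "\<dots> = fa_pair (\<lambda>y. \<Sum>d\<in>?D. fa_hcomp d P y) Q"
    unfolding fa_pair_def using lin_ext_sum[OF D, of "\<lambda>d. fa_hcomp d P"] finsupp_fa_hcomp[OF P]
    by simp
  finally show ?thesis by (simp add: sum_fa_hcomp[OF D])
qed

theorem mainTheorem14:
  fixes n :: nat
  assumes "n \<ge> 1"
  shows
   "(\<forall>d P Q. fa_elem n P \<and> fa_elem n Q \<and> fa_homog d P \<and> fa_homog d Q \<longrightarrow>
        fk_cong n (Delta P Q) (Delta Q P) \<and> fk_cong n (Delta Q P) (Nabla P Q)
      \<and> fk_cong n (Nabla P Q) (Nabla Q P)
      \<and> fa_homog 0 (Delta P Q) \<and> fa_homog 0 (Delta Q P) \<and> fa_homog 0 (Nabla P Q)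
      \<and> fa_homog 0 (Nabla Q P))
  \<and> (\<forall>d e P Q. fa_elem n P \<and> fa_elem n Q \<and> fa_homog d P \<and> fa_homog e Q \<longrightarrow>
        fk_pair P Q = (if d = e then Delta P Q [] else 0))
  \<and> (\<forall>P P' Q Q'. fa_elem n P \<and> fa_elem n P' \<and> fa_elem n Q \<and> fa_elem n Q' \<and>
        fk_cong n P P' \<and> fk_cong n Q Q' \<longrightarrow> fk_pair P Q = fk_pair P' Q')
  \<and> (\<forall>c P P' Q. fa_elem n P \<and> fa_elem n P' \<and> fa_elem n Q \<longrightarrow>
        fk_pair (fa_add (fa_smult c P) P') Q = c * fk_pair P Q + fk_pair P' Q
      \<and> fk_pair Q (fa_add (fa_smult c P) P') = c * fk_pair Q P + fk_pair Q P')
  \<and> (\<forall>P Q. fa_elem n P \<and> fa_elem n Q \<longrightarrow> fk_pair P Q = fk_pair Q P)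
  \<and> (\<forall>P1 P2 Q. fa_elem n P1 \<and> fa_elem n P2 \<and> fa_elem n Q \<longrightarrow>
        fk_pair (fa_mult P1 P2) Q = fk_pair P1 (Delta P2 Q)
      \<and> fk_pair P1 (Delta P2 Q) = fk_pair P2 (Nabla Q P1))"
  (is "?scalar \<and> ?graded \<and> ?congruent \<and> ?linear \<and> ?symmetric \<and> ?adjoint")
proof -
  note fin = finsupp_if_fa_elem[of n]
  have ?scalar
    by (auto simp: fin Delta_Nabla_homogeneous fk_cong_refl fa_homog_0_scalar)
       (metis fa_pair_commute fk_cong_refl)+
  moreover have ?graded
    by (auto simp: fin fk_pair_eq_fa_pair fa_pair_homogeneous)
  moreover have ?congruent
    using fa_pair_fk_cong by (auto simp: fin fk_pair_eq_fa_pair)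
  moreover have ?linear
    by (auto simp: fin fk_pair_eq_fa_pair finsupp_fa_add_smult fa_pair_linear_left fa_pair_linear_right)
  moreover have ?symmetric
    by (auto simp: fin fk_pair_eq_fa_pair fa_pair_commute)
  moreover have ?adjoint
    by (auto simp: fin fk_pair_eq_fa_pair finsupp_fa_mult finsupp_Delta finsupp_Nabla
        fa_pair_fa_mult_eq_Delta fa_pair_Delta_eq_Nabla)
  ultimately show ?thesis by (intro conjI)
qed

end
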